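(* Let $p,q\in(0,1)$, let $x,y,k$ be natural numbers and $N,T$ be positive integers. Then $$\mathbb{P}^{(x,y)}_{p,q}(Z_T\ge kN)\ge\gamma^{*a}([k,+\infty)),$$ where $a=\min(\lfloor x/N\rfloor,\lfloor y/N\rfloor)$ and $\gamma$ is the law of $\lfloor Z_T/N\rfloor$ under $\mathbb{P}^{(N,N)}_{p,q}$ (with the convention $\gamma^{*0}=\delta_0$).
   Context: Cooperative model: for $p,q\in(0,1)$, a Markov chain $(X_n,Y_n)_{n\ge0}$ on $\mathbb{N}^2$ whose transition law from state $(x,y)$ is $\mu_{(x,y)}=\mathrm{Bin}(2,q)^{*(x+y)}\otimes\mathrm{Bin}(2,p)^{*\min(x,y)}$, i.e. given the past, $X_{n+1}\sim\mathrm{Bin}(2(X_n+Y_n),q)$ and $Y_{n+1}\sim\mathrm{Bin}(2\min(X_n,Y_n),p)$ are independent. $\mathbb{P}^{(x,y)}_{p,q}$ denotes the law of this process started from $(x,y)$. $Z_n=\min(X_n,Y_n)$. *)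

theory Defs
  imports "HOL-Probability.Probability"
begin

text \<open>One-step transition law of the cooperative model from state (x,y):
  X' ~ Bin(2(x+y), q) and Y' ~ Bin(2 min(x,y), p), independent.
  (Bin(2,q)^{*n} = Bin(2n,q).)\<close>
definition coop_step :: "real \<Rightarrow> real \<Rightarrow> nat \<times> nat \<Rightarrow> (nat \<times> nat) pmf" where
  "coop_step p q s = (case s of (x, y) \<Rightarrow>
     pair_pmf (binomial_pmf (2 * (x + y)) q) (binomial_pmf (2 * min x y) p))"

definition coop_law :: "real \<Rightarrow> real \<Rightarrow> nat \<times> nat \<Rightarrow> nat \<Rightarrow> (nat \<times> nat) pmf" where
  "coop_law p q s0 n = ((\<lambda>m. bind_pmf m (coop_step p q)) ^^ n) (return_pmf s0)"

definition coop_Z_law :: "real \<Rightarrow> real \<Rightarrow> nat \<times> nat \<Rightarrow> nat \<Rightarrow> nat pmf" where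
  "coop_Z_law p q s0 n = map_pmf (\<lambda>(x, y). min x y) (coop_law p q s0 n)"

fun conv_pow :: "nat pmf \<Rightarrow> nat \<Rightarrow> nat pmf" where
  "conv_pow g 0 = return_pmf 0"
| "conv_pow g (Suc a) = bind_pmf g (\<lambda>u. map_pmf (\<lambda>v. u + v) (conv_pow g a))"

end

theory Submission
  imports Defs
begin

text \<open>
  Stochastic order is expressed by monotone couplings, \<open>rel_pmf (\<le>)\<close>. The transition law is
  monotone and superadditive in the state: since \<open>Bin(n+m) = Bin(n) * Bin(m)\<close> and
  \<open>min x\<^sub>1 y\<^sub>1 + min x\<^sub>2 y\<^sub>2 \<le> min (x\<^sub>1+x\<^sub>2) (y\<^sub>1+y\<^sub>2)\<close>, the sum of independent copies of the process
  started from \<open>s\<^sub>1\<close> and \<open>s\<^sub>2\<close> is dominated by the process started from \<open>s\<^sub>1 + s\<^sub>2\<close>, and this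
  propagates through the iteration. The process from \<open>(x, y)\<close> dominates the one from
  \<open>(aN, aN)\<close>, which in turn dominates the sum of \<open>a\<close> independent copies of the process from
  \<open>(N, N)\<close>; finally \<open>\<lfloor>\<cdot>/N\<rfloor>\<close> is monotone and superadditive.
\<close>

definition conv_pmf :: "'a::plus pmf \<Rightarrow> 'a pmf \<Rightarrow> 'a pmf" where
  "conv_pmf A B = bind_pmf A (\<lambda>a. map_pmf ((+) a) B)"

lemma conv_pmf_eq_map_pair_pmf: "conv_pmf A B = map_pmf (\<lambda>(a, b). a + b) (pair_pmf A B)"
  by (simp add: conv_pmf_def pair_pmf_def map_pmf_def bind_assoc_pmf bind_return_pmf)

lemma conv_pow_Suc_eq_conv_pmf: "conv_pow g (Suc a) = conv_pmf g (conv_pow g a)"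
  by (simp add: conv_pmf_def)

lemma conv_pmf_bind_pmf:
  "conv_pmf (bind_pmf A f) (bind_pmf B g) = bind_pmf (pair_pmf A B) (\<lambda>(a, b). conv_pmf (f a) (g b))"
  unfolding conv_pmf_def pair_pmf_def
  by (simp add: map_pmf_def bind_assoc_pmf bind_return_pmf)
     (rule bind_pmf_cong[OF refl], subst bind_commute_pmf, simp)

lemma conv_pmf_pair_pmf:
  "conv_pmf (pair_pmf A B) (pair_pmf A' B') = pair_pmf (conv_pmf A A') (conv_pmf B B')"
  unfolding conv_pmf_def pair_pmf_def
  by (simp add: map_pmf_def bind_assoc_pmf bind_return_pmf plus_prod_def)
     (rule bind_pmf_cong[OF refl], subst bind_commute_pmf, simp)

lemma rel_pmf_le_trans:
  fixes A B C :: "'a::preorder pmf"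
  assumes "rel_pmf (\<le>) A B" "rel_pmf (\<le>) B C"
  shows "rel_pmf (\<le>) A C"
proof -
  have "transp ((\<le>) :: 'a \<Rightarrow> 'a \<Rightarrow> bool)" by (auto intro: transpI order_trans)
  from transpD[OF transp_rel_pmf[OF this] assms] show ?thesis .
qed

lemma rel_pmf_le_map_pmf_mono:
  assumes "rel_pmf (\<le>) A B" "mono h"
  shows "rel_pmf (\<le>) (map_pmf h A) (map_pmf h B)"
  unfolding pmf.rel_map using assms by (auto elim: pmf.rel_mono_strong dest: monoD)

lemma rel_pmf_le_pair_pmf:
  assumes "rel_pmf (\<le>) A A'" "rel_pmf (\<le>) B B'"
  shows "rel_pmf (\<le>) (pair_pmf A B) (pair_pmf A' B')"
proof -
  have "rel_pmf (rel_prod (\<le>) (\<le>)) (pair_pmf A B) (pair_pmf A' B')"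
    using assms by (simp add: rel_pmf_rel_prod)
  then show ?thesis by (rule pmf.rel_mono_strong) (auto elim: rel_prod.cases)
qed

lemma conv_pmf_mono:
  fixes A A' B B' :: "'a::ordered_ab_semigroup_add pmf"
  assumes "rel_pmf (\<le>) A A'" "rel_pmf (\<le>) B B'"
  shows "rel_pmf (\<le>) (conv_pmf A B) (conv_pmf A' B')"
  unfolding conv_pmf_eq_map_pair_pmf pmf.rel_map
  using rel_pmf_le_pair_pmf[OF assms] by (rule pmf.rel_mono_strong) (auto intro: add_mono)

lemma rel_pmf_le_conv_pmf:
  fixes A B :: "'a::canonically_ordered_monoid_add pmf"
  shows "rel_pmf (\<le>) A (conv_pmf A B)"
proof -
  have "rel_pmf (\<le>) (bind_pmf A return_pmf) (conv_pmf A B)"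
    unfolding conv_pmf_def
    by (rule rel_pmf_bindI[where R = "(=)"])
       (auto intro: rel_pmf_reflI simp: rel_pmf_return_pmf1 le_iff_add)
  then show ?thesis by (simp add: bind_return_pmf')
qed

lemma conv_pmf_map_pmf_superadditive:
  assumes "\<And>u v. h u + h v \<le> h (u + v)"
  shows "rel_pmf (\<le>) (conv_pmf (map_pmf h A) (map_pmf h B)) (map_pmf h (conv_pmf A B))"
  unfolding conv_pmf_eq_map_pair_pmf map_pair[symmetric] pmf.map_comp pmf.rel_map
  by (rule rel_pmf_reflI) (auto simp: assms)

lemma binomial_pmf_add:
  assumes "p \<in> {0..1}"
  shows "binomial_pmf (n + m) p = conv_pmf (binomial_pmf n p) (binomial_pmf m p)"
proof (induction n)
  case 0
  have "(+) (0::nat) = id" by auto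
  with assms show ?case by (simp add: conv_pmf_def binomial_pmf_0 bind_return_pmf)
next
  case (Suc n)
  with assms show ?case
    by (simp add: binomial_pmf_Suc conv_pmf_def bind_assoc_pmf bind_return_pmf map_pmf_def
        add.assoc)
qed

lemma binomial_pmf_stoch_mono:
  assumes "p \<in> {0..1}" "n \<le> n'"
  shows "rel_pmf (\<le>) (binomial_pmf n p) (binomial_pmf n' p)"
  using rel_pmf_le_conv_pmf binomial_pmf_add[OF assms(1), of n "n' - n"] assms(2) by simp

lemma coop_step_mono:
  assumes "p \<in> {0..1}" "q \<in> {0..1}" "s \<le> s'"
  shows "rel_pmf (\<le>) (coop_step p q s) (coop_step p q s')"
proof -
  obtain x y x' y' where s: "s = (x, y)" "s' = (x', y')" by fastforce
  with assms(3) have "2 * (x + y) \<le> 2 * (x' + y')" "2 * min x y \<le> 2 * min x' y'"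
    by auto
  then show ?thesis
    unfolding s coop_step_def prod.case
    by (intro rel_pmf_le_pair_pmf binomial_pmf_stoch_mono assms(1,2))
qed

lemma coop_step_superadditive:
  assumes "p \<in> {0..1}" "q \<in> {0..1}"
  shows "rel_pmf (\<le>) (conv_pmf (coop_step p q s\<^sub>1) (coop_step p q s\<^sub>2)) (coop_step p q (s\<^sub>1 + s\<^sub>2))"
proof -
  obtain x\<^sub>1 y\<^sub>1 x\<^sub>2 y\<^sub>2 where s: "s\<^sub>1 = (x\<^sub>1, y\<^sub>1)" "s\<^sub>2 = (x\<^sub>2, y\<^sub>2)" by fastforce
  have "2 * min x\<^sub>1 y\<^sub>1 + 2 * min x\<^sub>2 y\<^sub>2 \<le> 2 * min (x\<^sub>1 + x\<^sub>2) (y\<^sub>1 + y\<^sub>2)"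
    by (simp add: min_def)
  then show ?thesis
    unfolding s coop_step_def prod.case conv_pmf_pair_pmf plus_prod_def fst_conv snd_conv
      binomial_pmf_add[OF assms(1), symmetric] binomial_pmf_add[OF assms(2), symmetric]
    by (intro rel_pmf_le_pair_pmf binomial_pmf_stoch_mono assms(1,2)) (simp_all add: algebra_simps)
qed

lemma coop_law_0: "coop_law p q s 0 = return_pmf s"
  by (simp add: coop_law_def)

lemma coop_law_Suc: "coop_law p q s (Suc n) = bind_pmf (coop_law p q s n) (coop_step p q)"
  by (simp add: coop_law_def)

lemma coop_law_mono:
  assumes "p \<in> {0..1}" "q \<in> {0..1}" "s \<le> s'"
  shows "rel_pmf (\<le>) (coop_law p q s n) (coop_law p q s' n)"
proof (induction n)
  case 0
  with assms(3) show ?case by (simp add: coop_law_0)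
next
  case (Suc n)
  then show ?case
    unfolding coop_law_Suc by (rule rel_pmf_bindI) (rule coop_step_mono[OF assms(1,2)])
qed

lemma coop_law_superadditive:
  assumes "p \<in> {0..1}" "q \<in> {0..1}"
  shows "rel_pmf (\<le>) (conv_pmf (coop_law p q s\<^sub>1 n) (coop_law p q s\<^sub>2 n)) (coop_law p q (s\<^sub>1 + s\<^sub>2) n)"
proof (induction n)
  case 0
  show ?case by (simp add: coop_law_0 conv_pmf_def bind_return_pmf)
next
  case (Suc n)
  have "rel_pmf (\<lambda>(a, b) c. a + b \<le> c)
      (pair_pmf (coop_law p q s\<^sub>1 n) (coop_law p q s\<^sub>2 n)) (coop_law p q (s\<^sub>1 + s\<^sub>2) n)"
    using Suc by (simp add: conv_pmf_eq_map_pair_pmf pmf.rel_map split_beta')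
  then show ?case
    unfolding coop_law_Suc conv_pmf_bind_pmf
  proof (rule rel_pmf_bindI, clarify)
    fix a b c :: "nat \<times> nat" assume "a + b \<le> c"
    then show "rel_pmf (\<le>) (conv_pmf (coop_step p q a) (coop_step p q b)) (coop_step p q c)"
      using rel_pmf_le_trans coop_step_superadditive[OF assms] coop_step_mono[OF assms]
      by blast
  qed
qed

lemma conv_pow_le_coop_law:
  fixes h :: "nat \<times> nat \<Rightarrow> nat"
  assumes "p \<in> {0..1}" "q \<in> {0..1}" "mono h" "\<And>u v. h u + h v \<le> h (u + v)"
  shows "rel_pmf (\<le>) (conv_pow (map_pmf h (coop_law p q (x, y) T)) a)
                     (map_pmf h (coop_law p q (a * x, a * y) T))"
proof (induction a)
  case 0
  show ?case by (simp add: rel_pmf_return_pmf1)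
next
  case (Suc a)
  let ?L = "coop_law p q (x, y) T" and ?La = "coop_law p q (a * x, a * y) T"
  have "rel_pmf (\<le>) (conv_pow (map_pmf h ?L) (Suc a)) (conv_pmf (map_pmf h ?L) (map_pmf h ?La))"
    unfolding conv_pow_Suc_eq_conv_pmf by (auto intro: conv_pmf_mono rel_pmf_reflI Suc)
  moreover have "rel_pmf (\<le>) (conv_pmf (map_pmf h ?L) (map_pmf h ?La)) (map_pmf h (conv_pmf ?L ?La))"
    by (rule conv_pmf_map_pmf_superadditive[where h = h, OF assms(4)])
  moreover have "rel_pmf (\<le>) (map_pmf h (conv_pmf ?L ?La))
                             (map_pmf h (coop_law p q (Suc a * x, Suc a * y) T))"
    using coop_law_superadditive[OF assms(1,2), where s\<^sub>1 = "(x, y)" and s\<^sub>2 = "(a * x, a * y)"]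
    by (intro rel_pmf_le_map_pmf_mono assms(3)) simp
  ultimately show ?case by (blast intro: rel_pmf_le_trans)
qed

lemma min_div_superadditive:
  "min x\<^sub>1 y\<^sub>1 div N + min x\<^sub>2 y\<^sub>2 div N \<le> min (x\<^sub>1 + x\<^sub>2) (y\<^sub>1 + y\<^sub>2) div (N::nat)"
proof -
  have "min x\<^sub>1 y\<^sub>1 div N + min x\<^sub>2 y\<^sub>2 div N \<le> (min x\<^sub>1 y\<^sub>1 + min x\<^sub>2 y\<^sub>2) div N"
    by (metis div_add1_eq le_add1)
  also have "\<dots> \<le> min (x\<^sub>1 + x\<^sub>2) (y\<^sub>1 + y\<^sub>2) div N"
    by (intro div_le_mono) (simp add: min_def)
  finally show ?thesis .
qed

lemma conv_pow_min_div_le_coop_law: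
  fixes N :: nat
  assumes "p \<in> {0..1}" "q \<in> {0..1}"
  defines "h \<equiv> \<lambda>s :: nat \<times> nat. min (fst s) (snd s) div N"
  shows "rel_pmf (\<le>) (conv_pow (map_pmf h (coop_law p q (N, N) T)) (min (x div N) (y div N)))
                     (map_pmf h (coop_law p q (x, y) T))"
proof -
  define a where "a = min (x div N) (y div N)"
  have "mono h" by (auto intro!: monoI div_le_mono min.mono simp: h_def less_eq_prod_def)
  moreover have "h u + h v \<le> h (u + v)" for u v
    by (simp add: h_def plus_prod_def min_div_superadditive)
  ultimately have "rel_pmf (\<le>) (conv_pow (map_pmf h (coop_law p q (N, N) T)) a)
                                (map_pmf h (coop_law p q (a * N, a * N) T))"
    by (rule conv_pow_le_coop_law[OF assms(1,2)])
  moreover have "(a * N, a * N) \<le> (x, y)"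
    by (simp add: a_def) (meson div_times_less_eq_dividend dual_order.trans min.cobounded1
        min.cobounded2 mult_le_mono1)
  then have "rel_pmf (\<le>) (map_pmf h (coop_law p q (a * N, a * N) T)) (map_pmf h (coop_law p q (x, y) T))"
    by (intro rel_pmf_le_map_pmf_mono coop_law_mono assms(1,2) \<open>mono h\<close>)
  ultimately show ?thesis unfolding a_def by (rule rel_pmf_le_trans)
qed

theorem lemma2:
  fixes p q :: real and x y k N T :: nat
  assumes "0 < p" "p < 1" "0 < q" "q < 1" "0 < N" "0 < T"
  shows "measure_pmf.prob (coop_Z_law p q (x, y) T) {k * N..}
    \<ge> measure_pmf.prob
        (conv_pow (map_pmf (\<lambda>z. z div N) (coop_Z_law p q (N, N) T)) (min (x div N) (y div N)))
        {k..}"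
proof -
  define h where "h = (\<lambda>s :: nat \<times> nat. min (fst s) (snd s) div N)"
  have "p \<in> {0..1}" "q \<in> {0..1}" using assms by auto
  then have "rel_pmf (\<le>) (conv_pow (map_pmf h (coop_law p q (N, N) T)) (min (x div N) (y div N)))
                          (map_pmf h (coop_law p q (x, y) T))"
    unfolding h_def by (rule conv_pow_min_div_le_coop_law)
  then have "measure_pmf.prob (conv_pow (map_pmf h (coop_law p q (N, N) T)) (min (x div N) (y div N)))
               {z. k \<le> z}
      \<le> measure_pmf.prob (map_pmf h (coop_law p q (x, y) T)) {z. k \<le> z}"
    by (rule measure_Ici) (auto intro: reflpI transpI)
  moreover have "map_pmf (\<lambda>z. z div N) (coop_Z_law p q s T) = map_pmf h (coop_law p q s T)" for s
    by (simp add: coop_Z_law_def h_def pmf.map_comp o_def split_beta')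
  moreover have "h -` {z. k \<le> z} = (\<lambda>(x, y). min x y) -` {k * N..}"
    using assms(5) by (auto simp: h_def less_eq_div_iff_mult_less_eq)
  ultimately show ?thesis
    by (simp add: coop_Z_law_def atLeast_def)
qed

end
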